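(* Let $n\ge r\ge1$, let $\mathcal{O}\subset\mathbb{R}^{n\times r}$ be open with ${\rm St}(n,r)\subset\mathcal{O}$, let $f:\mathcal{O}\to\mathbb{R}$ be continuously differentiable, and consider (P): $\min_{X\in\mathcal{S}_{+}^{n,r}}f(X)$. Fix $\gamma>0$. Suppose that every global (respectively, local) minimizer of (P) has no zero rows when $n>r>1$, and that for every global (respectively, local) minimizer $X^*$ of (P) there exist $\delta'>0$ and $L'>0$ such that for all $X\in{\rm St}(n,r)$ with $\|X-X^*\|_F\le\delta'$ and all $\overline{X}\in{\rm Proj}_{\mathcal{S}_{+}^{n,r}}(X)$, \[ f(X)-f(\overline{X})\ge -L'\|X-\overline{X}\|_F^2. \] Then for every global (respectively, local) minimizer $X^*$ of (P): 1. if $n=r$ or $n>r=1$, with $\kappa'>0$ a constant such that ${\rm dist}(Z,\mathcal{S}_{+}^{n,r})\le\kappa'{\rm dist}(Z,\mathbb{R}_{+}^{n\times r})$ for all $Z\in{\rm St}(n,r)$, there exists $\delta>0$ such that for all $X\in{\rm St}(n,r)$ with $\|X-X^*\|_F\le\delta$, $f(X)-f(X^* )+2\gamma(\kappa')^2L'\,e_\gamma\vartheta(X)\ge0$; 2. if $n>r>1$, with $\kappa:=\frac{2.1\sqrt{r}[1+3r(n-r)]}{X^*_{i^*j^*}}$ ($X^*_{i^*j^*}$ the smallest nonzero entry of $X^*$), there exists $\delta>0$ such that for all $\epsilon\ge0$ and all $X\in\mathcal{G}_\epsilon:=\{X\in{\rm St}(n,r): e_\gamma\vartheta(X)=\epsilon\}$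 with $\|X-X^*\|_F\le\delta$, $f(X)-f(X^* )+2\gamma\kappa^2L'\,e_\gamma\vartheta(X)\ge0$. Consequently, there exists $\widehat{\rho}>0$ such that for every $\rho\ge\widehat{\rho}$ the problem $\min_{X\in{\rm St}(n,r)}\{f(X)+\rho\, e_\gamma\vartheta(X)\}$ has the same set of global optimal solutions as (P).
   Context: ${\rm St}(n,r):=\{X\in\mathbb{R}^{n\times r}: X^\top X=I_r\}$, $\mathbb{R}_{+}^{n\times r}$ the entrywise nonnegative matrices, $\mathcal{S}_{+}^{n,r}:=\mathbb{R}_{+}^{n\times r}\cap{\rm St}(n,r)$, ${\rm dist}$ the Frobenius-norm distance and ${\rm Proj}_{\Omega}(X)$ the (set of) nearest points of $\Omega$ to $X$ in Frobenius norm. $\vartheta(X):=\sum_{i,j}\max(0,-X_{ij})$, and $e_\gamma\vartheta(X):=\min_{Z\in\mathbb{R}^{n\times r}}\{\frac{1}{2\gamma}\|Z-X\|_F^2+\vartheta(Z)\}$ is its Moreau envelope. *)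

theory Defs
  imports "HOL-Analysis.Analysis"
begin

text \<open>Matrices in R^(n x r) are modelled as real^'r^'n (rows indexed by 'n, columns by 'r).
  The norm on this type is the Frobenius norm, and dist is the Frobenius distance.\<close>

definition stiefel :: "(real^'r^'n) set" where
  "stiefel = {X. transpose X ** X = mat 1}"

definition nonneg_mats :: "(real^'r^'n) set" where
  "nonneg_mats = {X. \<forall>i j. 0 \<le> X $ i $ j}"

definition nn_stiefel :: "(real^'r^'n) set" where
  "nn_stiefel = nonneg_mats \<inter> stiefel"

definition proj_set :: "(real^'r^'n) set \<Rightarrow> real^'r^'n \<Rightarrow> (real^'r^'n) set" where
  "proj_set S X = {Y \<in> S. \<forall>Z\<in>S. dist X Y \<le> dist X Z}"

definition theta :: "real^'r^'n \<Rightarrow> real" where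
  "theta X = (\<Sum>i\<in>UNIV. \<Sum>j\<in>UNIV. max 0 (- (X $ i $ j)))"

definition moreau_theta :: "real \<Rightarrow> real^'r^'n \<Rightarrow> real" where
  "moreau_theta \<gamma> X = (INF Z. (1 / (2 * \<gamma>)) * (norm (Z - X))\<^sup>2 + theta Z)"

definition global_mins :: "('a \<Rightarrow> real) \<Rightarrow> 'a set \<Rightarrow> 'a set" where
  "global_mins f S = {X \<in> S. \<forall>Y\<in>S. f X \<le> f Y}"

definition local_mins :: "('a::metric_space \<Rightarrow> real) \<Rightarrow> 'a set \<Rightarrow> 'a set" where
  "local_mins f S = {X \<in> S. \<exists>\<delta>>0. \<forall>Y\<in>S. dist Y X < \<delta> \<longrightarrow> f X \<le> f Y}"

definition min_nonzero_entry :: "real^'r^'n \<Rightarrow> real" where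
  "min_nonzero_entry X = Min {X $ i $ j | i j. X $ i $ j \<noteq> 0}"

definition no_zero_rows :: "real^'r^'n \<Rightarrow> bool" where
  "no_zero_rows X = (\<forall>i. \<exists>j. X $ i $ j \<noteq> 0)"

end

theory Submission
  imports Defs
begin

text \<open>Near a minimizer \<open>Xs\<close> of (P), every \<open>X\<close> on the Stiefel manifold has a point of
  \<open>nn_stiefel\<close> at squared distance at most \<open>K\<close> times the sum of the squared negative entries of
  \<open>X\<close>: keep the positive part of the column (\<open>r = 1\<close>) or, in each row, the entry in the column
  where \<open>Xs\<close> is supported (no zero rows), and renormalise the columns. In the second case the
  discarded mass is controlled by the negative entries via the identity
  \<open>\<Sum>\<^sub>i (\<Sum>\<^sub>j X\<^sub>i\<^sub>j)\<^sup>2 = \<Sum>\<^sub>i\<^sub>j X\<^sub>i\<^sub>j\<^sup>2 = r\<close>, giving \<open>K = 16nr/m\<^sup>2 \<le> \<kappa>\<^sup>2\<close> with \<open>m\<close> the smallest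
  nonzero entry of \<open>Xs\<close>. Close to nonnegative matrices the Moreau envelope of \<open>\<theta>\<close> dominates
  that sum divided by \<open>2\<gamma>\<close>, so the growth condition and local optimality of \<open>Xs\<close> yield
  \<open>f X - f Xs + 2\<gamma>KL' e\<^sub>\<gamma>\<theta>(X) \<ge> 0\<close>. Compactness of the Stiefel manifold turns these local
  inequalities at the global minimizers into a single exact penalty threshold.\<close>

section \<open>Stiefel matrices\<close>

lemma norm_power2_eq_sum_entries:
  "(norm (X::real^'r^'n))\<^sup>2 = (\<Sum>i\<in>UNIV. \<Sum>j\<in>UNIV. (X$i$j)\<^sup>2)"
  unfolding power2_norm_eq_inner inner_vec_def by (simp add: power2_eq_square)

lemma norm_power2_eq_sum_columns:
  "(norm (X::real^'r^'n))\<^sup>2 = (\<Sum>j\<in>UNIV. \<Sum>i\<in>UNIV. (X$i$j)\<^sup>2)"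
  unfolding norm_power2_eq_sum_entries by (rule sum.swap)

lemma abs_entry_le_norm: "\<bar>(X::real^'r^'n)$i$j\<bar> \<le> norm X"
  using Finite_Cartesian_Product.norm_nth_le[of "X$i" j] Finite_Cartesian_Product.norm_nth_le[of X i]
  by simp

lemma stiefel_iff:
  "X \<in> (stiefel::(real^'r^'n) set) \<longleftrightarrow>
     (\<forall>j k. (\<Sum>i\<in>UNIV. X$i$j * X$i$k) = (if j = k then 1 else 0))"
  unfolding stiefel_def by (auto simp: vec_eq_iff matrix_matrix_mult_def transpose_def mat_def)

lemma stiefel_column_sum_sq:
  "X \<in> stiefel \<Longrightarrow> (\<Sum>i\<in>UNIV. ((X::real^'r^'n)$i$j)\<^sup>2) = 1"
  using stiefel_iff[of X] by (simp add: power2_eq_square)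

lemma stiefel_column_nonzero:
  assumes "X \<in> stiefel"
  shows "\<exists>i. (X::real^'r^'n)$i$j \<noteq> 0"
proof (rule ccontr)
  assume "\<not> (\<exists>i. X$i$j \<noteq> 0)"
  then have "(\<Sum>i\<in>UNIV. (X$i$j)\<^sup>2) = 0"
    by simp
  then show False
    using stiefel_column_sum_sq[OF assms, of j] by simp
qed

lemma stiefel_abs_entry_le_1:
  assumes "X \<in> stiefel"
  shows "\<bar>(X::real^'r^'n)$i$j\<bar> \<le> 1"
proof -
  have "(X$i$j)\<^sup>2 \<le> (\<Sum>i\<in>UNIV. (X$i$j)\<^sup>2)"
    by (rule member_le_sum) auto
  then have "(X$i$j)\<^sup>2 \<le> 1"
    using stiefel_column_sum_sq[OF assms] by simp
  then show ?thesis
    using abs_square_le_1 by blast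
qed

lemma stiefel_norm_power2: "X \<in> stiefel \<Longrightarrow> (norm (X::real^'r^'n))\<^sup>2 = real CARD('r)"
  unfolding norm_power2_eq_sum_entries by (subst sum.swap) (simp add: stiefel_column_sum_sq)

lemma stiefel_sum_row_sums_sq:
  assumes "X \<in> stiefel"
  shows "(\<Sum>i\<in>UNIV. (\<Sum>j\<in>UNIV. (X::real^'r^'n)$i$j)\<^sup>2) = real CARD('r)"
proof -
  have "(\<Sum>i\<in>UNIV. (\<Sum>j\<in>UNIV. X$i$j)\<^sup>2) = (\<Sum>i\<in>UNIV. \<Sum>j\<in>UNIV. \<Sum>k\<in>UNIV. X$i$j * X$i$k)"
    by (simp only: power2_eq_square sum_product)
  also have "\<dots> = (\<Sum>j\<in>UNIV. \<Sum>k\<in>UNIV. \<Sum>i\<in>UNIV. X$i$j * X$i$k)"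
    by (subst sum.swap) (rule sum.cong[OF refl], rule sum.swap)
  also have "\<dots> = (\<Sum>j\<in>(UNIV::'r set). \<Sum>k\<in>UNIV. if j = k then 1 else 0)"
    using assms by (simp add: stiefel_iff)
  finally show ?thesis by simp
qed

lemma compact_stiefel: "compact (stiefel::(real^'r^'n) set)"
proof (rule compact_eq_bounded_closed[THEN iffD2], rule conjI)
  show "bounded (stiefel::(real^'r^'n) set)"
    unfolding bounded_iff
    by (rule exI[of _ "sqrt (real CARD('r))"]) (auto dest!: stiefel_norm_power2 intro: real_le_rsqrt)
  have "stiefel = (\<Inter>j. \<Inter>k. {X::real^'r^'n. (\<Sum>i\<in>UNIV. X$i$j * X$i$k) = (if j = k then 1 else 0)})"
    by (auto simp: stiefel_iff)
  also have "closed \<dots>"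
    by (intro closed_INT ballI closed_Collect_eq continuous_intros)
  finally show "closed (stiefel::(real^'r^'n) set)" .
qed

lemma closed_nonneg_mats: "closed (nonneg_mats::(real^'r^'n) set)"
proof -
  have "nonneg_mats = (\<Inter>i. \<Inter>j. {X::real^'r^'n. 0 \<le> X$i$j})"
    by (auto simp: nonneg_mats_def)
  also have "closed \<dots>"
    by (intro closed_INT ballI closed_Collect_le continuous_intros)
  finally show ?thesis .
qed

lemma compact_nn_stiefel: "compact (nn_stiefel::(real^'r^'n) set)"
  unfolding nn_stiefel_def Int_commute[of nonneg_mats]
  by (intro compact_Int_closed compact_stiefel closed_nonneg_mats)

lemma nn_stiefel_nonneg: "X \<in> nn_stiefel \<Longrightarrow> 0 \<le> X$i$j"
  by (simp add: nn_stiefel_def nonneg_mats_def)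

lemma nn_stiefel_imp_stiefel: "X \<in> nn_stiefel \<Longrightarrow> X \<in> stiefel"
  by (simp add: nn_stiefel_def)

lemma nn_stiefel_nonempty:
  assumes "CARD('r) \<le> CARD('n)"
  shows "(nn_stiefel::(real^'r^'n) set) \<noteq> {}"
proof -
  obtain g :: "'r \<Rightarrow> 'n" where g: "inj g"
    using card_le_inj[of "UNIV::'r set" "UNIV::'n set"] assms by auto
  define E :: "real^'r^'n" where "E = (\<chi> i j. if i = g j then 1 else 0)"
  have "(\<Sum>i\<in>UNIV. E$i$j * E$i$k) = (if j = k then 1 else 0)" for j k
  proof -
    have "(\<Sum>i\<in>UNIV. E$i$j * E$i$k) = (\<Sum>i\<in>UNIV. if i = g j then (if g j = g k then 1 else 0) else 0)"
      by (intro sum.cong) (auto simp: E_def)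
    then show ?thesis
      using g by (simp add: inj_eq)
  qed
  then have "E \<in> stiefel" by (simp add: stiefel_iff)
  moreover have "E \<in> nonneg_mats" by (auto simp: nonneg_mats_def E_def)
  ultimately show ?thesis by (auto simp: nn_stiefel_def)
qed

lemma nn_stiefel_row_support_unique:
  assumes Xs: "Xs \<in> nn_stiefel" and "Xs$i$j \<noteq> 0" "Xs$i$k \<noteq> 0"
  shows "j = k"
proof (rule ccontr)
  assume "j \<noteq> k"
  then have "(\<Sum>i\<in>UNIV. Xs$i$j * Xs$i$k) = 0"
    using Xs by (simp add: nn_stiefel_def stiefel_iff)
  moreover have "\<forall>i\<in>UNIV. 0 \<le> Xs$i$j * Xs$i$k"
    using nn_stiefel_nonneg[OF Xs] by simp
  ultimately have "Xs$i$j * Xs$i$k = 0"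
    using sum_nonneg_eq_0_iff[of UNIV "\<lambda>i. Xs$i$j * Xs$i$k"] by simp
  then show False
    using assms(2,3) by simp
qed

lemma no_zero_rows_if_square:
  fixes Xs :: "real^'r^'n"
  assumes "CARD('n) = CARD('r)" and Xs: "Xs \<in> nn_stiefel"
  shows "no_zero_rows Xs"
proof -
  obtain g where g: "\<And>j. Xs$(g j)$j \<noteq> 0"
    using stiefel_column_nonzero[OF nn_stiefel_imp_stiefel[OF Xs]] by metis
  have "inj g"
  proof (rule injI)
    fix j k
    assume "g j = g k"
    then show "j = k"
      using nn_stiefel_row_support_unique[OF Xs g[of j]] g[of k] by simp
  qed
  then have "range g = UNIV"
    using assms(1) by (intro card_subset_eq) (auto simp: card_image)
  then show ?thesis
    unfolding no_zero_rows_def using g by (metis rangeE UNIV_I)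
qed

lemma single_column_or_no_zero_rows:
  fixes Xs :: "real^'r^'n"
  assumes "CARD('r) \<le> CARD('n)" "Xs \<in> nn_stiefel"
    and "CARD('n) > CARD('r) \<and> CARD('r) > 1 \<Longrightarrow> no_zero_rows Xs"
  shows "CARD('r) = 1 \<or> no_zero_rows Xs"
proof (cases "CARD('n) = CARD('r)")
  case True
  then show ?thesis
    using no_zero_rows_if_square[OF True assms(2)] by blast
next
  case False
  have "0 < CARD('r)"
    by simp
  then show ?thesis
    using False assms(1,3) by linarith
qed

lemma finite_nonzero_entries: "finite {(X::real^'r^'n)$i$j | i j. X$i$j \<noteq> 0}"
  by (rule finite_subset[of _ "(\<lambda>(i, j). X$i$j) ` UNIV"]) auto

lemma min_nonzero_entry_le: "X$i$j \<noteq> 0 \<Longrightarrow> min_nonzero_entry X \<le> X$i$j"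
  unfolding min_nonzero_entry_def by (intro Min_le finite_nonzero_entries) blast

lemma min_nonzero_entry_pos:
  assumes Xs: "Xs \<in> nn_stiefel"
  shows "0 < min_nonzero_entry Xs"
proof -
  have "{Xs$i$j | i j. Xs$i$j \<noteq> 0} \<noteq> {}"
    using stiefel_column_nonzero[OF nn_stiefel_imp_stiefel[OF Xs]] by blast
  then have "min_nonzero_entry Xs \<in> {Xs$i$j | i j. Xs$i$j \<noteq> 0}"
    unfolding min_nonzero_entry_def by (intro Min_in finite_nonzero_entries)
  then show ?thesis
    using nn_stiefel_nonneg[OF Xs] by (force simp: less_le)
qed

lemma proj_set_nonempty:
  assumes "closed S" "S \<noteq> {}"
  obtains Xb where "Xb \<in> proj_set S X"
proof -
  obtain Y where "Y \<in> S" "\<And>Z. Z \<in> S \<Longrightarrow> dist X Y \<le> dist X Z"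
    using distance_attains_inf[OF assms, of X] by blast
  then show ?thesis
    using that unfolding proj_set_def by blast
qed

lemma dist_proj_set:
  assumes "Xb \<in> proj_set S X"
  shows "dist X Xb = infdist X S"
proof (rule antisym)
  have Xb: "Xb \<in> S" "\<And>Z. Z \<in> S \<Longrightarrow> dist X Xb \<le> dist X Z"
    using assms by (auto simp: proj_set_def)
  then show "dist X Xb \<le> infdist X S"
    unfolding infdist_def by (auto intro!: cINF_greatest)
  show "infdist X S \<le> dist X Xb"
    using Xb(1) by (rule infdist_le)
qed

section \<open>The Moreau envelope of the negative part\<close>

definition neg_part_sq :: "real^'r^'n \<Rightarrow> real" where
  "neg_part_sq X = (\<Sum>i\<in>UNIV. \<Sum>j\<in>UNIV. (max 0 (- X$i$j))\<^sup>2)"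

lemma neg_part_sq_nonneg: "0 \<le> neg_part_sq X"
  unfolding neg_part_sq_def by (intro sum_nonneg) simp

lemma norm_minus_pos_part_power2:
  "(norm (X - (\<chi> i j. max 0 (X$i$j))))\<^sup>2 = neg_part_sq (X::real^'r^'n)"
  unfolding norm_power2_eq_sum_entries neg_part_sq_def
  by (intro sum.cong refl) (simp add: max_def power2_eq_square)

lemma infdist_nonneg_mats_le: "(infdist (X::real^'r^'n) nonneg_mats)\<^sup>2 \<le> neg_part_sq X"
proof -
  have "(\<chi> i j. max 0 (X$i$j)) \<in> nonneg_mats"
    by (simp add: nonneg_mats_def)
  then have "infdist X nonneg_mats \<le> norm (X - (\<chi> i j. max 0 (X$i$j)))"
    using infdist_le by (metis dist_norm)
  then show ?thesis
    unfolding norm_minus_pos_part_power2[symmetric] by (intro power_mono infdist_nonneg)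
qed

text \<open>The scalar Moreau envelope of \<open>max 0 (- x)\<close> is the Huber function; this continuous
  minorant agrees with it on \<open>[-\<gamma>, \<infinity>)\<close> and avoids the infimum defining \<open>moreau_theta\<close>.\<close>
definition huber_minorant :: "real \<Rightarrow> real \<Rightarrow> real" where
  "huber_minorant \<gamma> x = min ((max 0 (- x))\<^sup>2) (\<gamma>\<^sup>2) / (2 * \<gamma>)"

lemma huber_minorant_le:
  assumes "\<gamma> > 0"
  shows "huber_minorant \<gamma> x \<le> (1 / (2 * \<gamma>)) * (z - x)\<^sup>2 + max 0 (- z)"
proof -
  have "min ((max 0 (- x))\<^sup>2) (\<gamma>\<^sup>2) \<le> (z - x)\<^sup>2 + 2 * \<gamma> * max 0 (- z)"
  proof (cases "0 \<le> x")
    case True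
    then show ?thesis
      using assms by (simp add: min_def)
  next
    case x: False
    consider "0 \<le> z" | "z < 0" "- \<gamma> \<le> x" | "z < 0" "x < - \<gamma>"
      by linarith
    then show ?thesis
    proof cases
      case 1
      have "0 \<le> z * (z - 2 * x)"
        using 1 x by simp
      then have "x\<^sup>2 \<le> (z - x)\<^sup>2"
        by (simp add: power2_eq_square algebra_simps)
      then show ?thesis
        using 1 x by (simp add: min.coboundedI1)
    next
      case 2
      have "0 \<le> z * (z - 2 * x - 2 * \<gamma>)"
        using 2 by (intro mult_nonpos_nonpos) auto
      then have "x\<^sup>2 \<le> (z - x)\<^sup>2 + 2 * \<gamma> * (- z)"
        by (simp add: power2_eq_square algebra_simps)
      then show ?thesis
        using 2 x by (simp add: min.coboundedI1)
    next
      case 3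
      have "\<gamma> * (x + \<gamma>) < 0"
        using 3 assms by (intro mult_pos_neg) auto
      then have "0 \<le> (z - x - \<gamma>)\<^sup>2 - 2 * (\<gamma> * (x + \<gamma>))"
        using zero_le_power2[of "z - x - \<gamma>"] by linarith
      then have "\<gamma>\<^sup>2 \<le> (z - x)\<^sup>2 + 2 * \<gamma> * (- z)"
        by (simp add: power2_eq_square algebra_simps)
      then show ?thesis
        using 3 by (simp add: min.coboundedI2)
    qed
  qed
  then show ?thesis
    using assms by (simp add: huber_minorant_def field_simps)
qed

lemma huber_minorant_nonneg: "\<gamma> > 0 \<Longrightarrow> 0 \<le> huber_minorant \<gamma> x"
  by (simp add: huber_minorant_def)

lemma huber_minorant_pos: "\<gamma> > 0 \<Longrightarrow> x < 0 \<Longrightarrow> 0 < huber_minorant \<gamma> x"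
  by (simp add: huber_minorant_def)

lemma huber_minorant_eq:
  assumes "\<gamma> > 0" "- \<gamma> \<le> x"
  shows "huber_minorant \<gamma> x = (max 0 (- x))\<^sup>2 / (2 * \<gamma>)"
proof -
  have "(max 0 (- x))\<^sup>2 \<le> \<gamma>\<^sup>2"
    using assms by (intro power_mono) auto
  then show ?thesis
    by (simp add: huber_minorant_def)
qed

definition moreau_theta_minorant :: "real \<Rightarrow> real^'r^'n \<Rightarrow> real" where
  "moreau_theta_minorant \<gamma> X = (\<Sum>i\<in>UNIV. \<Sum>j\<in>UNIV. huber_minorant \<gamma> (X$i$j))"

lemma moreau_theta_minorant_le:
  assumes "\<gamma> > 0"
  shows "moreau_theta_minorant \<gamma> X \<le> moreau_theta \<gamma> X"
  unfolding moreau_theta_def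
proof (rule cINF_greatest)
  fix Z
  have "moreau_theta_minorant \<gamma> X \<le>
      (\<Sum>i\<in>UNIV. \<Sum>j\<in>UNIV. (1 / (2 * \<gamma>)) * (Z$i$j - X$i$j)\<^sup>2 + max 0 (- Z$i$j))"
    unfolding moreau_theta_minorant_def by (intro sum_mono huber_minorant_le assms)
  also have "\<dots> = (1 / (2 * \<gamma>)) * (norm (Z - X))\<^sup>2 + theta Z"
    unfolding norm_power2_eq_sum_entries theta_def by (simp add: sum.distrib sum_distrib_left)
  finally show "moreau_theta_minorant \<gamma> X \<le> (1 / (2 * \<gamma>)) * (norm (Z - X))\<^sup>2 + theta Z" .
qed simp

lemma moreau_theta_minorant_nonneg: "\<gamma> > 0 \<Longrightarrow> 0 \<le> moreau_theta_minorant \<gamma> X"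
  unfolding moreau_theta_minorant_def by (intro sum_nonneg huber_minorant_nonneg)

lemma moreau_theta_minorant_pos:
  assumes "\<gamma> > 0" "X \<notin> nonneg_mats"
  shows "0 < moreau_theta_minorant \<gamma> X"
proof -
  obtain i j where "X$i$j < 0"
    using assms(2) by (auto simp: nonneg_mats_def not_le)
  then have "0 < (\<Sum>j\<in>UNIV. huber_minorant \<gamma> (X$i$j))"
    using assms(1) by (intro sum_pos2[of _ j]) (auto intro: huber_minorant_pos huber_minorant_nonneg)
  then show ?thesis
    unfolding moreau_theta_minorant_def using assms(1)
    by (intro sum_pos2[of _ i]) (auto intro: sum_nonneg huber_minorant_nonneg)
qed

lemma continuous_on_moreau_theta_minorant:
  "\<gamma> > 0 \<Longrightarrow> continuous_on S (moreau_theta_minorant \<gamma>)"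
  unfolding moreau_theta_minorant_def huber_minorant_def by (intro continuous_intros) auto

lemma moreau_theta_nonneg: "\<gamma> > 0 \<Longrightarrow> 0 \<le> moreau_theta \<gamma> X"
  using moreau_theta_minorant_nonneg moreau_theta_minorant_le order_trans by blast

lemma moreau_theta_eq_0:
  assumes "\<gamma> > 0" "X \<in> nonneg_mats"
  shows "moreau_theta \<gamma> X = 0"
proof -
  have "theta X = 0"
    using assms(2) unfolding theta_def nonneg_mats_def by (intro sum.neutral ballI) simp
  then have "moreau_theta \<gamma> X \<le> 0"
    unfolding moreau_theta_def using assms(1)
    by (intro cINF_lower2[where x=X]) (auto intro!: bdd_belowI[of _ 0] add_nonneg_nonneg sum_nonneg simp: theta_def)
  then show ?thesis
    using moreau_theta_nonneg[OF assms(1), of X] by simp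
qed

lemma neg_part_sq_le_moreau_theta:
  assumes \<gamma>: "\<gamma> > 0" and Y: "Y \<in> nonneg_mats" and near: "norm (X - Y) \<le> \<gamma>"
  shows "neg_part_sq X \<le> 2 * \<gamma> * moreau_theta \<gamma> X"
proof -
  have "- \<gamma> \<le> X$i$j" for i j
  proof -
    have "0 \<le> Y$i$j"
      using Y by (simp add: nonneg_mats_def)
    then show ?thesis
      using abs_entry_le_norm[of "X - Y" i j] near by (simp add: abs_le_iff)
  qed
  then have "moreau_theta_minorant \<gamma> X = neg_part_sq X / (2 * \<gamma>)"
    using \<gamma> unfolding neg_part_sq_def moreau_theta_minorant_def
    by (simp add: huber_minorant_eq sum_divide_distrib)
  then have "neg_part_sq X = 2 * \<gamma> * moreau_theta_minorant \<gamma> X"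
    using \<gamma> by simp
  also have "\<dots> \<le> 2 * \<gamma> * moreau_theta \<gamma> X"
    using \<gamma> moreau_theta_minorant_le[OF \<gamma>] by (intro mult_left_mono) auto
  finally show ?thesis .
qed

section \<open>Local error bounds for the nonnegative Stiefel set\<close>

text \<open>\<open>x\<close> splits orthogonally as \<open>w + (x - w)\<close>, and normalising \<open>w\<close> (of norm \<open>p\<close>) costs
  \<open>(1 - p)\<^sup>2 \<le> 1 - p\<^sup>2 = \<parallel>x - w\<parallel>\<^sup>2\<close>.\<close>
lemma dist_normalized_restriction_le:
  fixes x w :: "'a::finite \<Rightarrow> real"
  assumes x: "(\<Sum>i\<in>UNIV. (x i)\<^sup>2) = 1" and restr: "\<And>i. w i = 0 \<or> w i = x i"
    and p: "p = sqrt (\<Sum>i\<in>UNIV. (w i)\<^sup>2)" "0 < p"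
  shows "(\<Sum>i\<in>UNIV. (x i - w i / p)\<^sup>2) \<le> 2 * (\<Sum>i\<in>UNIV. (x i - w i)\<^sup>2)"
proof -
  define q where "q = (\<Sum>i\<in>UNIV. (x i - w i)\<^sup>2)"
  have p_sq: "p\<^sup>2 = (\<Sum>i\<in>UNIV. (w i)\<^sup>2)"
    using p by (simp add: sum_nonneg)
  have "(x i)\<^sup>2 = (w i)\<^sup>2 + (x i - w i)\<^sup>2" for i
    using restr[of i] by auto
  then have pq: "p\<^sup>2 + q = 1"
    using x unfolding p_sq q_def by (simp add: sum.distrib)
  have "(x i - w i / p)\<^sup>2 = (x i - w i)\<^sup>2 + (w i)\<^sup>2 * (1 - 1 / p)\<^sup>2" for i
    using restr[of i] by (auto simp: power2_eq_square algebra_simps)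
  then have "(\<Sum>i\<in>UNIV. (x i - w i / p)\<^sup>2) = q + p\<^sup>2 * (1 - 1 / p)\<^sup>2"
    by (simp add: q_def p_sq sum.distrib sum_distrib_right)
  also have "p\<^sup>2 * (1 - 1 / p)\<^sup>2 = (1 - p)\<^sup>2"
    using p(2) by (simp add: power2_eq_square field_simps)
  also have "(1 - p)\<^sup>2 \<le> (1 - p) * (1 + p)"
  proof -
    have "0 \<le> q"
      by (simp add: q_def sum_nonneg)
    then have "p\<^sup>2 \<le> 1"
      using pq by linarith
    then have "p \<le> 1"
      using power2_le_imp_le[of p 1] by simp
    then show ?thesis
      using p(2) by (simp add: power2_eq_square mult_left_mono)
  qed
  also have "\<dots> = q"
    using pq by (simp add: power2_eq_square algebra_simps)
  finally show ?thesis
    by (simp add: q_def)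
qed

lemma infdist_nn_stiefel_le_restriction:
  fixes X W :: "real^'r^'n"
  assumes X: "X \<in> stiefel"
    and restr: "\<And>i j. W$i$j = 0 \<or> W$i$j = X$i$j"
    and W_nonneg: "W \<in> nonneg_mats"
    and W_orth: "\<And>j k. j \<noteq> k \<Longrightarrow> (\<Sum>i\<in>UNIV. W$i$j * W$i$k) = 0"
    and W_col: "\<And>j. \<exists>i. W$i$j \<noteq> 0"
  shows "(infdist X nn_stiefel)\<^sup>2 \<le> 2 * (norm (X - W))\<^sup>2"
proof -
  define p where "p j = sqrt (\<Sum>i\<in>UNIV. (W$i$j)\<^sup>2)" for j
  have p_pos: "0 < p j" for j
  proof -
    obtain i where "W$i$j \<noteq> 0" using W_col by blast
    then have "0 < (\<Sum>i\<in>UNIV. (W$i$j)\<^sup>2)"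
      by (intro sum_pos2[of _ i]) auto
    then show ?thesis by (simp add: p_def)
  qed
  define Y :: "real^'r^'n" where "Y = (\<chi> i j. W$i$j / p j)"
  have "Y \<in> stiefel"
    unfolding stiefel_iff
  proof (intro allI)
    fix j k
    have "(\<Sum>i\<in>UNIV. Y$i$j * Y$i$k) = (\<Sum>i\<in>UNIV. W$i$j * W$i$k) / (p j * p k)"
      by (simp add: Y_def sum_divide_distrib)
    then show "(\<Sum>i\<in>UNIV. Y$i$j * Y$i$k) = (if j = k then 1 else 0)"
      using W_orth[of j k] p_pos[of j] by (cases "j = k") (auto simp: p_def power2_eq_square sum_nonneg)
  qed
  moreover have "Y \<in> nonneg_mats"
    using W_nonneg p_pos by (simp add: Y_def nonneg_mats_def less_imp_le)
  ultimately have "infdist X nn_stiefel \<le> norm (X - Y)"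
    using infdist_le[of Y nn_stiefel X] by (simp add: nn_stiefel_def dist_norm)
  then have "(infdist X nn_stiefel)\<^sup>2 \<le> (norm (X - Y))\<^sup>2"
    by (intro power_mono infdist_nonneg)
  also have "\<dots> \<le> (\<Sum>j\<in>UNIV. 2 * (\<Sum>i\<in>UNIV. (X$i$j - W$i$j)\<^sup>2))"
    unfolding norm_power2_eq_sum_columns using stiefel_column_sum_sq[OF X] restr p_pos
    by (intro sum_mono) (simp add: Y_def dist_normalized_restriction_le p_def)
  also have "\<dots> = 2 * (norm (X - W))\<^sup>2"
    by (simp add: norm_power2_eq_sum_columns sum_distrib_left)
  finally show ?thesis .
qed

text \<open>For \<open>r = 1\<close> keep the positive part of the single column; it is nonzero near \<open>Xs\<close>
  because a column with no positive entry is at distance at least \<open>\<surd>2\<close> from \<open>Xs\<close>.\<close>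
lemma error_bound_single_column:
  fixes X Xs :: "real^'r^'n"
  assumes r: "CARD('r) = 1" and Xs: "Xs \<in> nn_stiefel" and X: "X \<in> stiefel"
    and near: "norm (X - Xs) \<le> 1"
  shows "(infdist X nn_stiefel)\<^sup>2 \<le> 2 * neg_part_sq X"
proof -
  define W :: "real^'r^'n" where "W = (\<chi> i j. max 0 (X$i$j))"
  have single: "j = k" for j k :: 'r
    using r card_le_Suc0_iff_eq[of "UNIV::'r set"] by simp
  have "\<exists>i. W$i$j \<noteq> 0" for j
  proof (rule ccontr)
    assume "\<not> (\<exists>i. W$i$j \<noteq> 0)"
    then have X_nonpos: "X$i$j \<le> 0" for i
      by (metis W_def max.cobounded2 vec_lambda_beta)
    have "(\<Sum>i\<in>UNIV. X$i$j * Xs$i$j) \<le> 0"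
      using X_nonpos nn_stiefel_nonneg[OF Xs] by (intro sum_nonpos mult_nonpos_nonneg)
    moreover have "(\<Sum>i\<in>UNIV. ((X - Xs)$i$j)\<^sup>2) =
        (\<Sum>i\<in>UNIV. (X$i$j)\<^sup>2) + (\<Sum>i\<in>UNIV. (Xs$i$j)\<^sup>2) - 2 * (\<Sum>i\<in>UNIV. X$i$j * Xs$i$j)"
      by (simp add: power2_diff sum.distrib sum_subtractf sum_distrib_left mult.assoc)
    moreover have "(\<Sum>i\<in>UNIV. ((X - Xs)$i$j)\<^sup>2) \<le> (norm (X - Xs))\<^sup>2"
      unfolding norm_power2_eq_sum_columns by (rule member_le_sum) (auto intro: sum_nonneg)
    moreover have "(norm (X - Xs))\<^sup>2 \<le> 1"
      using near by (simp add: power_le_one)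
    ultimately show False
      using stiefel_column_sum_sq[OF X, of j]
        stiefel_column_sum_sq[OF nn_stiefel_imp_stiefel[OF Xs], of j]
      by linarith
  qed
  then have "(infdist X nn_stiefel)\<^sup>2 \<le> 2 * (norm (X - W))\<^sup>2"
    using X single by (intro infdist_nn_stiefel_le_restriction) (auto simp: W_def nonneg_mats_def)
  then show ?thesis
    by (simp add: W_def norm_minus_pos_part_power2)
qed

text \<open>Both \<open>\<Sum>\<^sub>i (\<Sum>\<^sub>j X\<^sub>i\<^sub>j)\<^sup>2\<close> and \<open>\<Sum>\<^sub>i \<Sum>\<^sub>j X\<^sub>i\<^sub>j\<^sup>2\<close> equal \<open>r\<close>; splitting off the entry
  in column \<open>c i\<close> of each row and comparing the two expansions bounds the cross terms.\<close>
lemma stiefel_cross_terms_le: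
  fixes X :: "real^'r^'n" and c :: "'n \<Rightarrow> 'r"
  assumes "X \<in> stiefel"
  shows "2 * (\<Sum>i\<in>UNIV. X$i$(c i) * (\<Sum>j\<in>UNIV - {c i}. X$i$j))
           \<le> (\<Sum>i\<in>UNIV. \<Sum>j\<in>UNIV - {c i}. (X$i$j)\<^sup>2)"
proof -
  define a where "a i = X$i$(c i)" for i
  define b where "b i = (\<Sum>j\<in>UNIV - {c i}. X$i$j)" for i
  define w where "w i = (\<Sum>j\<in>UNIV - {c i}. (X$i$j)\<^sup>2)" for i
  have "(\<Sum>j\<in>UNIV. X$i$j) = a i + b i" "(\<Sum>j\<in>UNIV. (X$i$j)\<^sup>2) = (a i)\<^sup>2 + w i" for i
    unfolding a_def b_def w_def by (simp_all add: sum.remove[of UNIV "c i"])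
  then have "(\<Sum>i\<in>UNIV. (a i + b i)\<^sup>2) = (\<Sum>i\<in>UNIV. (a i)\<^sup>2 + w i)"
    using stiefel_sum_row_sums_sq[OF assms] stiefel_norm_power2[OF assms]
    unfolding norm_power2_eq_sum_entries by simp
  then have "(\<Sum>i\<in>UNIV. 2 * (a i * b i) + (b i)\<^sup>2) = (\<Sum>i\<in>UNIV. w i)"
    by (simp add: power2_sum sum.distrib algebra_simps)
  moreover have "0 \<le> (\<Sum>i\<in>UNIV. (b i)\<^sup>2)"
    by (simp add: sum_nonneg)
  ultimately show ?thesis
    unfolding a_def [symmetric] b_def [symmetric] w_def [symmetric]
    by (simp add: sum.distrib sum_distrib_left)
qed

lemma mult_pos_part_minus_neg_part_le:
  fixes a b x :: real
  assumes "0 \<le> b" "b \<le> a" "a \<le> 1"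
  shows "b * max 0 x - max 0 (- x) \<le> a * x"
proof (cases "0 \<le> x")
  case True
  then show ?thesis
    using assms by (simp add: mult_right_mono)
next
  case False
  then have "0 \<le> (1 - a) * (- x)"
    using assms by (intro mult_nonneg_nonneg) auto
  then show ?thesis
    using False by (simp add: algebra_simps)
qed

text \<open>Positive off-pattern entries make the cross terms of \<open>stiefel_cross_terms_le\<close> large,
  while those cross terms are bounded by the off-pattern squares, which are small; so the
  off-pattern mass is paid for by the negative entries alone.\<close>
lemma off_pattern_abs_sum_le:
  fixes X :: "real^'r^'n" and c :: "'n \<Rightarrow> 'r"
  assumes X: "X \<in> stiefel" and m: "0 < m" "m \<le> 1"
    and on: "\<And>i. 3 * m / 4 \<le> X$i$(c i)"
    and off: "\<And>i j. j \<noteq> c i \<Longrightarrow> \<bar>X$i$j\<bar> \<le> m / 4"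
  shows "m * (\<Sum>i\<in>UNIV. \<Sum>j\<in>UNIV - {c i}. \<bar>X$i$j\<bar>) \<le> 14 / 5 * theta X"
proof -
  define P where "P = (\<Sum>i\<in>UNIV. \<Sum>j\<in>UNIV - {c i}. max 0 (X$i$j))"
  define N where "N = (\<Sum>i\<in>UNIV. \<Sum>j\<in>UNIV - {c i}. max 0 (- X$i$j))"
  define O2 where "O2 = (\<Sum>i\<in>UNIV. \<Sum>j\<in>UNIV - {c i}. (X$i$j)\<^sup>2)"
  have abs_sum: "(\<Sum>i\<in>UNIV. \<Sum>j\<in>UNIV - {c i}. \<bar>X$i$j\<bar>) = P + N"
    unfolding P_def N_def sum.distrib[symmetric] by (intro sum.cong refl) (simp add: abs_if)
  have N_nonneg: "0 \<le> N"
    unfolding N_def by (intro sum_nonneg) simp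
  have N_le: "N \<le> theta X"
    unfolding N_def theta_def by (intro sum_mono sum_mono2) auto
  have "3 * m / 4 * P - N \<le> (\<Sum>i\<in>UNIV. X$i$(c i) * (\<Sum>j\<in>UNIV - {c i}. X$i$j))"
  proof -
    have "3 * m / 4 * max 0 (X$i$j) - max 0 (- X$i$j) \<le> X$i$(c i) * X$i$j" for i j
      using m on[of i] stiefel_abs_entry_le_1[OF X, of i "c i"]
      by (intro mult_pos_part_minus_neg_part_le) auto
    then have "(\<Sum>i\<in>UNIV. \<Sum>j\<in>UNIV - {c i}. 3 * m / 4 * max 0 (X$i$j) - max 0 (- X$i$j))
        \<le> (\<Sum>i\<in>UNIV. X$i$(c i) * (\<Sum>j\<in>UNIV - {c i}. X$i$j))"
      by (simp add: sum_distrib_left sum_mono)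
    then show ?thesis
      by (simp add: P_def N_def sum_subtractf sum_distrib_left)
  qed
  moreover have "3 * m / 4 * P = 3 / 4 * (m * P)"
    by simp
  ultimately have cross: "3 / 2 * (m * P) - 2 * N \<le> O2"
    using stiefel_cross_terms_le[OF X, of c] unfolding O2_def by linarith
  have "O2 \<le> (\<Sum>i\<in>UNIV. \<Sum>j\<in>UNIV - {c i}. m / 4 * \<bar>X$i$j\<bar>)"
    unfolding O2_def
  proof (intro sum_mono)
    fix i j
    assume "j \<in> UNIV - {c i}"
    then have "\<bar>X$i$j\<bar> * \<bar>X$i$j\<bar> \<le> m / 4 * \<bar>X$i$j\<bar>"
      using off[of j i] by (intro mult_right_mono) auto
    then show "(X$i$j)\<^sup>2 \<le> m / 4 * \<bar>X$i$j\<bar>"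
      by (simp add: power2_eq_square)
  qed
  also have "\<dots> = m / 4 * (P + N)"
    by (simp only: abs_sum[symmetric] sum_distrib_left)
  also have "\<dots> = 1 / 4 * (m * P) + 1 / 4 * (m * N)"
    by (simp add: algebra_simps)
  finally have "O2 \<le> 1 / 4 * (m * P) + 1 / 4 * (m * N)" .
  moreover have "m * N \<le> N"
    using m N_nonneg by (simp add: mult_left_le_one_le)
  moreover have "m * (P + N) = m * P + m * N"
    by (simp add: algebra_simps)
  ultimately have "m * (P + N) \<le> 14 / 5 * N"
    using cross by linarith
  then show ?thesis
    using N_le abs_sum by simp
qed

lemma sum_power2_le_power2_sum:
  fixes f :: "'a \<Rightarrow> real"
  assumes "\<And>x. x \<in> A \<Longrightarrow> 0 \<le> f x"
  shows "(\<Sum>x\<in>A. (f x)\<^sup>2) \<le> (\<Sum>x\<in>A. f x)\<^sup>2"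
  using assms
proof (induction A rule: infinite_finite_induct)
  case (insert x A)
  then have "0 \<le> 2 * f x * (\<Sum>x\<in>A. f x)"
    by (simp add: sum_nonneg)
  with insert show ?case
    by (simp add: power2_sum)
qed simp_all

lemma double_sum_power2_le:
  fixes h :: "'n::finite \<Rightarrow> 'r::finite \<Rightarrow> real"
  shows "(\<Sum>i\<in>UNIV. \<Sum>j\<in>UNIV. h i j)\<^sup>2
           \<le> real CARD('n) * real CARD('r) * (\<Sum>i\<in>UNIV. \<Sum>j\<in>UNIV. (h i j)\<^sup>2)"
proof -
  have "(\<Sum>i\<in>UNIV. \<Sum>j\<in>UNIV. h i j) = (\<Sum>p\<in>UNIV. h (fst p) (snd p))"
    "(\<Sum>i\<in>UNIV. \<Sum>j\<in>UNIV. (h i j)\<^sup>2) = (\<Sum>p\<in>UNIV. (h (fst p) (snd p))\<^sup>2)"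
    by (simp_all add: sum.cartesian_product case_prod_beta)
  moreover have "(\<Sum>p\<in>UNIV. h (fst p) (snd p))\<^sup>2
      \<le> (\<Sum>p\<in>UNIV. (h (fst p) (snd p))\<^sup>2) * card (UNIV::('n \<times> 'r) set)"
    by (rule sum_squared_le_sum_of_squares)
  moreover have "card (UNIV::('n \<times> 'r) set) = CARD('n) * CARD('r)"
    using card_cartesian_product[of "UNIV::'n set" "UNIV::'r set"] by simp
  ultimately show ?thesis
    by (simp add: mult.commute)
qed

lemma off_pattern_sum_sq_le:
  fixes X :: "real^'r^'n" and c :: "'n \<Rightarrow> 'r"
  assumes X: "X \<in> stiefel" and m: "0 < m" "m \<le> 1"
    and on: "\<And>i. 3 * m / 4 \<le> X$i$(c i)"
    and off: "\<And>i j. j \<noteq> c i \<Longrightarrow> \<bar>X$i$j\<bar> \<le> m / 4"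
  shows "m\<^sup>2 * (\<Sum>i\<in>UNIV. \<Sum>j\<in>UNIV - {c i}. (X$i$j)\<^sup>2)
           \<le> 8 * real CARD('n) * real CARD('r) * neg_part_sq X"
proof -
  define S where "S = (\<Sum>i\<in>UNIV. \<Sum>j\<in>UNIV - {c i}. \<bar>X$i$j\<bar>)"
  have "(\<Sum>i\<in>UNIV. \<Sum>j\<in>UNIV - {c i}. (X$i$j)\<^sup>2) \<le> (\<Sum>i\<in>UNIV. (\<Sum>j\<in>UNIV - {c i}. \<bar>X$i$j\<bar>)\<^sup>2)"
    using sum_power2_le_power2_sum[of _ "\<lambda>j. \<bar>X$_$j\<bar>"] by (intro sum_mono) simp
  also have "\<dots> \<le> S\<^sup>2"
    unfolding S_def by (intro sum_power2_le_power2_sum sum_nonneg) simp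
  finally have "m\<^sup>2 * (\<Sum>i\<in>UNIV. \<Sum>j\<in>UNIV - {c i}. (X$i$j)\<^sup>2) \<le> (m * S)\<^sup>2"
    unfolding power_mult_distrib by (simp add: mult_left_mono)
  also have "\<dots> \<le> (14 / 5 * theta X)\<^sup>2"
    using off_pattern_abs_sum_le[OF X m on off] m
    by (intro power_mono) (auto simp: S_def sum_nonneg)
  also have "\<dots> \<le> (14 / 5)\<^sup>2 * (real CARD('n) * real CARD('r) * neg_part_sq X)"
    unfolding power_mult_distrib theta_def neg_part_sq_def
    by (intro mult_left_mono double_sum_power2_le) simp
  also have "\<dots> \<le> 8 * (real CARD('n) * real CARD('r) * neg_part_sq X)"
    using neg_part_sq_nonneg[of X] by (simp add: power2_eq_square)
  finally show ?thesis
    by simp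
qed

text \<open>Keep in each row only the entry in column \<open>c i\<close>; since \<open>c\<close> is onto, no column of the result
  vanishes.\<close>
lemma infdist_nn_stiefel_le_off_pattern:
  fixes X :: "real^'r^'n" and c :: "'n \<Rightarrow> 'r"
  assumes X: "X \<in> stiefel" and c: "surj c" and pos: "\<And>i. 0 < X$i$(c i)"
  shows "(infdist X nn_stiefel)\<^sup>2 \<le> 2 * (\<Sum>i\<in>UNIV. \<Sum>j\<in>UNIV - {c i}. (X$i$j)\<^sup>2)"
proof -
  define W :: "real^'r^'n" where "W = (\<chi> i j. if j = c i then X$i$j else 0)"
  have "(infdist X nn_stiefel)\<^sup>2 \<le> 2 * (norm (X - W))\<^sup>2"
  proof (rule infdist_nn_stiefel_le_restriction[OF X])
    show "W$i$j = 0 \<or> W$i$j = X$i$j" for i j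
      unfolding W_def by simp
    show "W \<in> nonneg_mats"
      unfolding nonneg_mats_def W_def using pos by (simp add: less_imp_le)
    show "(\<Sum>i\<in>UNIV. W$i$j * W$i$k) = 0" if "j \<noteq> k" for j k
      unfolding W_def using that by (intro sum.neutral) auto
    show "\<exists>i. W$i$j \<noteq> 0" for j
    proof -
      obtain i where "c i = j"
        using c by (metis surjD)
      then have "W$i$j \<noteq> 0"
        using pos[of i] by (simp add: W_def)
      then show ?thesis ..
    qed
  qed
  also have "(\<Sum>j\<in>UNIV. ((X - W)$i$j)\<^sup>2) = (\<Sum>j\<in>UNIV - {c i}. (X$i$j)\<^sup>2)" for i
    by (simp add: sum.remove[of UNIV "c i"] W_def cong: sum.cong_simp)
  then have "(norm (X - W))\<^sup>2 = (\<Sum>i\<in>UNIV. \<Sum>j\<in>UNIV - {c i}. (X$i$j)\<^sup>2)"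
    unfolding norm_power2_eq_sum_entries by simp
  finally show ?thesis .
qed

lemma nn_stiefel_row_pattern:
  fixes Xs :: "real^'r^'n"
  assumes Xs: "Xs \<in> nn_stiefel" and rows: "no_zero_rows Xs"
  obtains c where "surj c" "\<And>i. min_nonzero_entry Xs \<le> Xs$i$(c i)"
    "\<And>i j. j \<noteq> c i \<Longrightarrow> Xs$i$j = 0"
proof -
  obtain c where c: "\<And>i. Xs$i$(c i) \<noteq> 0"
    using rows unfolding no_zero_rows_def by metis
  have off: "Xs$i$j = 0" if "j \<noteq> c i" for i j
    using nn_stiefel_row_support_unique[OF Xs _ c[of i]] that by blast
  have "\<exists>i. j = c i" for j
  proof -
    obtain i where "Xs$i$j \<noteq> 0"
      using stiefel_column_nonzero[OF nn_stiefel_imp_stiefel[OF Xs]] by blast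
    then show ?thesis
      using off by blast
  qed
  then show ?thesis
    using that[of c] min_nonzero_entry_le[OF c] off by (auto simp: surj_def)
qed

lemma error_bound_no_zero_rows:
  fixes X Xs :: "real^'r^'n"
  assumes Xs: "Xs \<in> nn_stiefel" and rows: "no_zero_rows Xs" and X: "X \<in> stiefel"
    and near: "norm (X - Xs) \<le> min_nonzero_entry Xs / 4"
  shows "(infdist X nn_stiefel)\<^sup>2
           \<le> 16 * real CARD('n) * real CARD('r) / (min_nonzero_entry Xs)\<^sup>2 * neg_part_sq X"
proof -
  define m where "m = min_nonzero_entry Xs"
  obtain c where c: "surj c" and m_le: "\<And>i. m \<le> Xs$i$(c i)"
    and Xs_off: "\<And>i j. j \<noteq> c i \<Longrightarrow> Xs$i$j = 0"
    using nn_stiefel_row_pattern[OF Xs rows] unfolding m_def by blast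
  have m_pos: "0 < m"
    using min_nonzero_entry_pos[OF Xs] by (simp add: m_def)
  have m_le_1: "m \<le> 1"
    using m_le[of undefined] stiefel_abs_entry_le_1[OF nn_stiefel_imp_stiefel[OF Xs]]
    by (meson abs_le_D1 order_trans)
  have close: "\<bar>X$i$j - Xs$i$j\<bar> \<le> m / 4" for i j
    using abs_entry_le_norm[of "X - Xs" i j] near by (simp add: m_def)
  have on: "3 * m / 4 \<le> X$i$(c i)" for i
    using close[of i "c i"] m_le[of i] unfolding abs_le_iff by linarith
  have off: "\<bar>X$i$j\<bar> \<le> m / 4" if "j \<noteq> c i" for i j
    using close[of i j] Xs_off[OF that] by simp
  have "0 < X$i$(c i)" for i
    using on[of i] m_pos by linarith
  then have "m\<^sup>2 * (infdist X nn_stiefel)\<^sup>2 \<le> 2 * (m\<^sup>2 * (\<Sum>i\<in>UNIV. \<Sum>j\<in>UNIV - {c i}. (X$i$j)\<^sup>2))"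
    using infdist_nn_stiefel_le_off_pattern[OF X c] m_pos by (simp add: mult_left_mono)
  also have "\<dots> \<le> 16 * real CARD('n) * real CARD('r) * neg_part_sq X"
    using off_pattern_sum_sq_le[OF X m_pos m_le_1 on off] by linarith
  finally show ?thesis
    using m_pos by (simp add: m_def field_simps)
qed

lemma error_bound_of_distance_ratio:
  fixes X :: "real^'r^'n"
  assumes "\<forall>Z\<in>(stiefel :: (real^'r^'n) set). infdist Z nn_stiefel \<le> \<kappa> * infdist Z nonneg_mats"
    and "0 < \<kappa>" and "X \<in> stiefel"
  shows "(infdist X nn_stiefel)\<^sup>2 \<le> \<kappa>\<^sup>2 * neg_part_sq X"
proof -
  have "(infdist X nn_stiefel)\<^sup>2 \<le> (\<kappa> * infdist X nonneg_mats)\<^sup>2"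
    using assms by (intro power_mono) (auto simp: infdist_nonneg)
  also have "\<dots> \<le> \<kappa>\<^sup>2 * neg_part_sq X"
    unfolding power_mult_distrib by (intro mult_left_mono infdist_nonneg_mats_le) simp
  finally show ?thesis .
qed

lemma no_zero_rows_constant_le:
  fixes N R m :: real
  assumes R: "2 \<le> R" and N: "R + 1 \<le> N" and m: "0 < m"
  shows "16 * N * R / m\<^sup>2 \<le> (21 / 10 * sqrt R * (1 + 3 * R * (N - R)) / m)\<^sup>2"
proof -
  define T where "T = 1 + 3 * R * (N - R)"
  have "2 * 1 \<le> R * (N - R)"
    using R N by (intro mult_mono) auto
  then have T7: "7 \<le> T"
    by (simp add: T_def)
  have "(3 * R - 1) * 1 \<le> (3 * R - 1) * (N - R)"
    using R N by (intro mult_left_mono) auto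
  then have "N \<le> T"
    unfolding T_def using R by (simp add: algebra_simps)
  moreover have "7 * T \<le> T * T"
    using T7 by (intro mult_right_mono) auto
  moreover have "(21 / 10)\<^sup>2 * T\<^sup>2 = 441 / 100 * (T * T)"
    by (simp add: power2_eq_square)
  ultimately have "16 * N \<le> (21 / 10)\<^sup>2 * T\<^sup>2"
    using T7 by linarith
  then have "16 * N * R \<le> (21 / 10)\<^sup>2 * T\<^sup>2 * R"
    using R by (intro mult_right_mono) auto
  moreover have "(21 / 10 * sqrt R * T / m)\<^sup>2 = (21 / 10)\<^sup>2 * T\<^sup>2 * R / m\<^sup>2"
    using R by (simp add: power_mult_distrib power_divide)
  ultimately show ?thesis
    unfolding T_def[symmetric] by (simp add: divide_right_mono)
qed

section \<open>Exact penalties on compact sets\<close>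

lemma global_mins_subset_local_mins: "global_mins f S \<subseteq> local_mins f S"
  by (auto simp: global_mins_def local_mins_def intro: exI[of _ 1])

lemma global_mins_compact:
  fixes f :: "'a::metric_space \<Rightarrow> real"
  assumes M: "compact M" "M \<noteq> {}" and f: "continuous_on M f"
  obtains fs where "global_mins f M = M \<inter> f -` {fs}" "global_mins f M \<noteq> {}"
    "\<And>X. X \<in> M \<Longrightarrow> fs \<le> f X" "compact (global_mins f M)"
proof -
  obtain Xmin where Xmin: "Xmin \<in> M" "\<And>X. X \<in> M \<Longrightarrow> f Xmin \<le> f X"
    using continuous_attains_inf[OF M f] by blast
  have F_eq: "global_mins f M = M \<inter> f -` {f Xmin}"
    using Xmin by (auto simp: global_mins_def intro: antisym)
  have "closed (M \<inter> f -` {f Xmin})"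
    using f compact_imp_closed[OF M(1)] by (rule continuous_closed_preimage) simp
  then have "compact (global_mins f M)"
    using compact_Int_closed[OF M(1)] unfolding F_eq by (metis Int_left_absorb)
  then show ?thesis
    using that[of "f Xmin"] F_eq Xmin by blast
qed

lemma global_mins_eqI:
  assumes "F \<subseteq> S" "F \<noteq> {}" "\<And>X. X \<in> F \<Longrightarrow> g X = c" "\<And>X. X \<in> S \<Longrightarrow> c \<le> g X"
    and "\<And>X. X \<in> S \<Longrightarrow> g X \<le> c \<Longrightarrow> X \<in> F"
  shows "global_mins g S = F"
proof
  show "global_mins g S \<subseteq> F"
  proof
    fix X
    assume X: "X \<in> global_mins g S"
    obtain Y where "Y \<in> F"
      using assms(2) by blast
    then have "X \<in> S" "g X \<le> c"
      using X assms(1,3) by (auto simp: global_mins_def)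
    then show "X \<in> F"
      by (rule assms(5))
  qed
  show "F \<subseteq> global_mins g S"
    using assms(1,3,4) by (auto simp: global_mins_def)
qed

lemma compact_uniform_local_penalty:
  fixes f e :: "'a::metric_space \<Rightarrow> real"
  assumes F: "compact F" and f_F: "\<And>Xs. Xs \<in> F \<Longrightarrow> f Xs = fs"
    and e: "\<And>X. X \<in> S \<Longrightarrow> 0 \<le> e X"
    and local: "\<And>Xs. Xs \<in> F \<Longrightarrow> \<exists>\<delta>>0. \<exists>C. \<forall>X\<in>S. dist X Xs \<le> \<delta> \<longrightarrow> f Xs \<le> f X + C * e X"
  obtains U C where "open U" "F \<subseteq> U" "0 \<le> C" "\<And>X. X \<in> S \<Longrightarrow> X \<in> U \<Longrightarrow> fs \<le> f X + C * e X"
proof -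
  obtain \<delta> C where \<delta>: "\<And>Xs. Xs \<in> F \<Longrightarrow> \<delta> Xs > 0"
    and C: "\<And>Xs X. Xs \<in> F \<Longrightarrow> X \<in> S \<Longrightarrow> dist X Xs \<le> \<delta> Xs \<Longrightarrow> f Xs \<le> f X + C Xs * e X"
    using local by metis
  obtain T where T: "T \<subseteq> F" "finite T" "F \<subseteq> (\<Union>Xs\<in>T. ball Xs (\<delta> Xs))"
    using compactE_image[OF F, of F "\<lambda>Xs. ball Xs (\<delta> Xs)"] \<delta> by force
  define C' where "C' = (\<Sum>Xs\<in>T. max 0 (C Xs))"
  have "fs \<le> f X + C' * e X" if X: "X \<in> S" "X \<in> (\<Union>Xs\<in>T. ball Xs (\<delta> Xs))" for X
  proof -
    obtain Xs where Xs: "Xs \<in> T" "dist X Xs < \<delta> Xs"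
      using X(2) by (auto simp: dist_commute)
    have "C Xs \<le> C'"
      unfolding C'_def using T(2) Xs(1) by (metis max.boundedE member_le_sum max.cobounded1)
    then have "C Xs * e X \<le> C' * e X"
      using e[OF X(1)] by (rule mult_right_mono)
    moreover have "f Xs \<le> f X + C Xs * e X"
      using C[OF _ X(1)] Xs T(1) by force
    ultimately show ?thesis
      using f_F Xs(1) T(1) by force
  qed
  moreover have "0 \<le> C'"
    unfolding C'_def by (simp add: sum_nonneg)
  ultimately show ?thesis
    using that[of "\<Union>Xs\<in>T. ball Xs (\<delta> Xs)" C'] T(3) by blast
qed

lemma compact_continuous_pos_lower_bound:
  fixes g :: "'a::metric_space \<Rightarrow> real"
  assumes "compact K" "continuous_on K g" "\<And>x. x \<in> K \<Longrightarrow> 0 < g x"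
  obtains \<mu> where "0 < \<mu>" "\<And>x. x \<in> K \<Longrightarrow> \<mu> \<le> g x"
proof (cases "K = {}")
  case False
  then obtain x0 where "x0 \<in> K" "\<And>x. x \<in> K \<Longrightarrow> g x0 \<le> g x"
    using continuous_attains_inf[OF assms(1) _ assms(2)] by blast
  then show ?thesis
    using that assms(3) by blast
qed (rule that[of 1], auto)

text \<open>Away from a neighbourhood of the minimizers, points of \<open>S\<close> either have \<open>f > fs\<close> or are
  infeasible, and on the compact set where \<open>f \<le> fs\<close> the infeasibility \<open>\<psi>\<close> is bounded away from
  zero.\<close>
lemma compact_penalty_away_from_minimizers:
  fixes f e \<psi> :: "'a::metric_space \<Rightarrow> real"
  assumes K: "compact K" and f: "continuous_on K f" and \<psi>: "continuous_on K \<psi>"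
    and \<psi>_le: "\<And>X. X \<in> K \<Longrightarrow> 0 \<le> \<psi> X \<and> \<psi> X \<le> e X"
    and feasible: "\<And>X. X \<in> K \<Longrightarrow> \<psi> X = 0 \<Longrightarrow> fs < f X"
  obtains \<rho>1 where "0 < \<rho>1" "\<And>X \<rho>. X \<in> K \<Longrightarrow> \<rho>1 \<le> \<rho> \<Longrightarrow> fs < f X + \<rho> * e X"
proof -
  define K' where "K' = K \<inter> f -` {..fs}"
  have "closed K'"
    unfolding K'_def using continuous_closed_preimage[OF f compact_imp_closed[OF K] closed_atMost] .
  then have "compact K'"
    using compact_Int_closed[OF K, of K'] by (simp add: K'_def Int_absorb1)
  moreover have "continuous_on K' \<psi>"
    using \<psi> by (rule continuous_on_subset) (simp add: K'_def)
  moreover have "0 < \<psi> X" if "X \<in> K'" for X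
    using that \<psi>_le[of X] feasible[of X] by (force simp: K'_def)
  ultimately obtain \<mu> where \<mu>: "0 < \<mu>" "\<And>X. X \<in> K' \<Longrightarrow> \<mu> \<le> \<psi> X"
    using compact_continuous_pos_lower_bound by blast
  obtain B where B: "\<And>X. X \<in> K \<Longrightarrow> B \<le> f X"
  proof -
    obtain a where "\<And>X. X \<in> K \<Longrightarrow> \<bar>f X\<bar> \<le> a"
      using compact_imp_bounded[OF compact_continuous_image[OF f K]] unfolding bounded_real by auto
    then show ?thesis
      using that[of "- a"] by (meson abs_le_D2 minus_le_iff)
  qed
  define \<rho>1 where "\<rho>1 = max 1 ((fs - B) / \<mu> + 1)"
  have "fs < f X + \<rho> * e X" if X: "X \<in> K" and \<rho>: "\<rho>1 \<le> \<rho>" for X \<rho>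
  proof (cases "X \<in> K'")
    case True
    have "fs - B + \<mu> = ((fs - B) / \<mu> + 1) * \<mu>"
      using \<mu>(1) by (simp add: field_simps)
    also have "\<dots> \<le> \<rho> * \<mu>"
      using \<rho> \<mu>(1) by (intro mult_right_mono) (auto simp: \<rho>1_def)
    also have "\<dots> \<le> \<rho> * e X"
      using \<mu>(2)[OF True] \<psi>_le[OF X] \<rho> by (intro mult_left_mono) (auto simp: \<rho>1_def)
    finally show ?thesis
      using B[OF X] \<mu>(1) by linarith
  next
    case False
    then have "fs < f X"
      using X by (simp add: K'_def)
    moreover have "0 \<le> \<rho> * e X"
      using \<psi>_le[OF X] \<rho> by (intro mult_nonneg_nonneg) (auto simp: \<rho>1_def)
    ultimately show ?thesis
      by linarith
  qed
  moreover have "0 < \<rho>1"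
    by (simp add: \<rho>1_def)
  ultimately show ?thesis
    using that by blast
qed

text \<open>Near the global minimizers the local penalty inequalities hold with one constant by
  compactness; away from them \<open>compact_penalty_away_from_minimizers\<close> applies.\<close>
lemma compact_exact_penalty:
  fixes f e \<psi> :: "'a::metric_space \<Rightarrow> real"
  assumes S: "compact S" and f: "continuous_on S f" and \<psi>: "continuous_on S \<psi>"
    and M: "closed M" "M \<subseteq> S" "M \<noteq> {}"
    and \<psi>_le: "\<And>X. X \<in> S \<Longrightarrow> 0 \<le> \<psi> X \<and> \<psi> X \<le> e X"
    and \<psi>_pos: "\<And>X. X \<in> S \<Longrightarrow> X \<notin> M \<Longrightarrow> 0 < \<psi> X"
    and e_M: "\<And>X. X \<in> M \<Longrightarrow> e X = 0"
    and local: "\<And>Xs. Xs \<in> global_mins f M \<Longrightarrow>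
      \<exists>\<delta>>0. \<exists>C. \<forall>X\<in>S. dist X Xs \<le> \<delta> \<longrightarrow> f Xs \<le> f X + C * e X"
  shows "\<exists>\<rho>h>0. \<forall>\<rho>\<ge>\<rho>h. global_mins (\<lambda>X. f X + \<rho> * e X) S = global_mins f M"
proof -
  have "compact M"
    using compact_Int_closed[OF S M(1)] M(2) by (simp add: Int_absorb1)
  then obtain fs where F: "global_mins f M = M \<inter> f -` {fs}" "global_mins f M \<noteq> {}"
      and fs_le: "\<And>X. X \<in> M \<Longrightarrow> fs \<le> f X" and F_compact: "compact (global_mins f M)"
    using global_mins_compact[OF _ M(3) continuous_on_subset[OF f M(2)]] by blast
  define F where "F = global_mins f M"
  have e_nonneg: "0 \<le> e X" if "X \<in> S" for X
    using \<psi>_le[OF that] by linarith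
  have f_F: "f X = fs" if "X \<in> F" for X
    using that F(1) by (simp add: F_def)
  obtain U C where U: "open U" "F \<subseteq> U" "0 \<le> C"
      and near: "\<And>X. X \<in> S \<Longrightarrow> X \<in> U \<Longrightarrow> fs \<le> f X + C * e X"
    using compact_uniform_local_penalty[of F f fs S e, OF _ f_F e_nonneg local] F_compact
    unfolding F_def by blast
  have "fs < f X" if X: "X \<in> S - U" "\<psi> X = 0" for X
  proof -
    have "X \<in> M"
      using X \<psi>_pos[of X] by auto
    moreover have "X \<notin> F"
      using X(1) U(2) by blast
    ultimately show ?thesis
      using fs_le[of X] F(1) unfolding F_def by fastforce
  qed
  moreover have "compact (S - U)" "continuous_on (S - U) f" "continuous_on (S - U) \<psi>"
    using compact_diff[OF S U(1)] continuous_on_subset[OF f] continuous_on_subset[OF \<psi>] by auto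
  ultimately obtain \<rho>1 where \<rho>1: "0 < \<rho>1"
      "\<And>X \<rho>. X \<in> S - U \<Longrightarrow> \<rho>1 \<le> \<rho> \<Longrightarrow> fs < f X + \<rho> * e X"
    using compact_penalty_away_from_minimizers[of "S - U" f \<psi> e fs] \<psi>_le by blast
  have "global_mins (\<lambda>X. f X + \<rho> * e X) S = F" if \<rho>: "max \<rho>1 (C + 1) \<le> \<rho>" for \<rho>
  proof (rule global_mins_eqI[where c = fs])
    have in_U: "fs + e X \<le> f X + \<rho> * e X" if "X \<in> S" "X \<in> U" for X
      using near[OF that] mult_right_mono[OF _ e_nonneg[OF that(1)], of "C + 1" \<rho>] \<rho>
      by (simp add: algebra_simps)
    show "fs \<le> f X + \<rho> * e X" if "X \<in> S" for X
      using in_U[OF that] \<rho>1(2)[of X \<rho>] e_nonneg[OF that] that \<rho> by force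
    show "X \<in> F" if X: "X \<in> S" "f X + \<rho> * e X \<le> fs" for X
    proof -
      have "X \<in> U"
        using \<rho>1(2)[of X \<rho>] \<rho> X by force
      then have "e X \<le> 0"
        using in_U[OF X(1)] X(2) by force
      then have "X \<in> M"
        using \<psi>_pos[OF X(1)] \<psi>_le[OF X(1)] by force
      then show ?thesis
        using X(2) e_M fs_le[of X] unfolding F_def F(1) by force
    qed
  qed (use F(1,2) M(2) e_M in \<open>auto simp: F_def\<close>)
  moreover have "0 < max \<rho>1 (C + 1)"
    using \<rho>1(1) by simp
  ultimately show ?thesis
    unfolding F_def by blast
qed

section \<open>Penalty inequalities at minimizers\<close>

lemma local_exact_penalty:
  fixes f :: "real^'r^'n \<Rightarrow> real"
  assumes \<gamma>: "\<gamma> > 0" and Xs: "Xs \<in> local_mins f nn_stiefel"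
    and L: "0 \<le> L" and K: "0 \<le> K" and \<delta>': "\<delta>' > 0"
    and growth: "\<forall>X\<in>stiefel. norm (X - Xs) \<le> \<delta>' \<longrightarrow>
      (\<forall>Xb \<in> proj_set nn_stiefel X. f X - f Xb \<ge> - L * (norm (X - Xb))\<^sup>2)"
    and error_bound: "\<exists>\<delta>>0. \<forall>X\<in>stiefel. norm (X - Xs) \<le> \<delta> \<longrightarrow>
      (infdist X nn_stiefel)\<^sup>2 \<le> K * neg_part_sq X"
  shows "\<exists>\<delta>>0. \<forall>X\<in>stiefel. norm (X - Xs) \<le> \<delta> \<longrightarrow>
           f X - f Xs + 2 * \<gamma> * K * L * moreau_theta \<gamma> X \<ge> 0"
proof -
  obtain \<delta>0 where \<delta>0: "\<delta>0 > 0" and min: "\<And>Y. Y \<in> nn_stiefel \<Longrightarrow> dist Y Xs < \<delta>0 \<Longrightarrow> f Xs \<le> f Y"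
    using Xs by (auto simp: local_mins_def)
  obtain \<delta>1 where \<delta>1: "\<delta>1 > 0" and eb: "\<And>X. X \<in> stiefel \<Longrightarrow> norm (X - Xs) \<le> \<delta>1 \<Longrightarrow>
      (infdist X nn_stiefel)\<^sup>2 \<le> K * neg_part_sq X"
    using error_bound by blast
  have Xs_nn: "Xs \<in> nn_stiefel"
    using Xs by (simp add: local_mins_def)
  define \<delta> where "\<delta> = min (min \<delta>' \<delta>1) (min (\<delta>0 / 3) \<gamma>)"
  have "f X - f Xs + 2 * \<gamma> * K * L * moreau_theta \<gamma> X \<ge> 0"
    if X: "X \<in> stiefel" and near: "norm (X - Xs) \<le> \<delta>" for X
  proof -
    obtain Xb where Xb: "Xb \<in> proj_set nn_stiefel X"
      using proj_set_nonempty[OF compact_imp_closed[OF compact_nn_stiefel]] Xs_nn by blast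
    have Xb_nn: "Xb \<in> nn_stiefel"
      using Xb by (simp add: proj_set_def)
    have dist_Xb: "dist X Xb \<le> \<delta>"
      using dist_proj_set[OF Xb] infdist_le[OF Xs_nn, of X] near by (simp add: dist_norm)
    have "dist Xb Xs \<le> dist Xb X + dist X Xs"
      by (rule dist_triangle)
    also have "\<dots> < \<delta>0"
      using dist_Xb near \<delta>0 by (simp add: dist_commute dist_norm \<delta>_def)
    finally have "f Xs \<le> f Xb"
      using min Xb_nn by blast
    moreover have "f X - f Xb \<ge> - L * (norm (X - Xb))\<^sup>2"
      using growth X near Xb by (simp add: \<delta>_def)
    moreover have "(norm (X - Xb))\<^sup>2 \<le> K * neg_part_sq X"
      using eb[OF X] near dist_proj_set[OF Xb] by (simp add: \<delta>_def dist_norm)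
    moreover have "neg_part_sq X \<le> 2 * \<gamma> * moreau_theta \<gamma> X"
      using near Xs_nn by (intro neg_part_sq_le_moreau_theta[OF \<gamma>]) (auto simp: nn_stiefel_def \<delta>_def)
    ultimately have "(norm (X - Xb))\<^sup>2 \<le> K * (2 * \<gamma> * moreau_theta \<gamma> X)"
      and "f Xs - f X \<le> L * (norm (X - Xb))\<^sup>2"
      using K by (auto intro: order_trans mult_left_mono)
    then have "f Xs - f X \<le> L * (K * (2 * \<gamma> * moreau_theta \<gamma> X))"
      using L by (meson mult_left_mono order_trans)
    then show ?thesis
      by (simp add: algebra_simps)
  qed
  moreover have "\<delta> > 0"
    using \<delta>0 \<delta>' \<delta>1 \<gamma> by (simp add: \<delta>_def)
  ultimately show ?thesis
    by blast
qed

lemma local_exact_penalty_distance_ratio: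
  fixes f :: "real^'r^'n \<Rightarrow> real"
  assumes \<gamma>: "\<gamma> > 0" and Xs: "Xs \<in> local_mins f nn_stiefel"
    and L: "0 \<le> L" and \<delta>': "\<delta>' > 0"
    and growth: "\<forall>X\<in>stiefel. norm (X - Xs) \<le> \<delta>' \<longrightarrow>
      (\<forall>Xb \<in> proj_set nn_stiefel X. f X - f Xb \<ge> - L * (norm (X - Xb))\<^sup>2)"
    and \<kappa>: "0 < \<kappa>" "\<forall>Z\<in>(stiefel :: (real^'r^'n) set). infdist Z nn_stiefel \<le> \<kappa> * infdist Z nonneg_mats"
  shows "\<exists>\<delta>>0. \<forall>X\<in>stiefel. norm (X - Xs) \<le> \<delta> \<longrightarrow>
           f X - f Xs + 2 * \<gamma> * \<kappa>\<^sup>2 * L * moreau_theta \<gamma> X \<ge> 0"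
  using error_bound_of_distance_ratio[OF \<kappa>(2,1)]
  by (intro local_exact_penalty[OF \<gamma> Xs L _ \<delta>' growth] exI[of _ 1]) auto

lemma local_exact_penalty_no_zero_rows:
  fixes f :: "real^'r^'n \<Rightarrow> real"
  assumes \<gamma>: "\<gamma> > 0" and Xs: "Xs \<in> local_mins f nn_stiefel" and rows: "no_zero_rows Xs"
    and card: "1 < CARD('r)" "CARD('r) < CARD('n)"
    and L: "0 \<le> L" and \<delta>': "\<delta>' > 0"
    and growth: "\<forall>X\<in>stiefel. norm (X - Xs) \<le> \<delta>' \<longrightarrow>
      (\<forall>Xb \<in> proj_set nn_stiefel X. f X - f Xb \<ge> - L * (norm (X - Xb))\<^sup>2)"
  defines "\<kappa> \<equiv> 21 / 10 * sqrt (real CARD('r)) *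
    (1 + 3 * real CARD('r) * (real CARD('n) - real CARD('r))) / min_nonzero_entry Xs"
  shows "\<exists>\<delta>>0. \<forall>X\<in>stiefel. norm (X - Xs) \<le> \<delta> \<longrightarrow>
           f X - f Xs + 2 * \<gamma> * \<kappa>\<^sup>2 * L * moreau_theta \<gamma> X \<ge> 0"
proof (rule local_exact_penalty[OF \<gamma> Xs L _ \<delta>' growth])
  have Xs_nn: "Xs \<in> nn_stiefel"
    using Xs by (simp add: local_mins_def)
  then have m: "0 < min_nonzero_entry Xs"
    by (rule min_nonzero_entry_pos)
  have "16 * real CARD('n) * real CARD('r) / (min_nonzero_entry Xs)\<^sup>2 \<le> \<kappa>\<^sup>2"
    unfolding \<kappa>_def using card m by (intro no_zero_rows_constant_le) auto
  then have "16 * real CARD('n) * real CARD('r) / (min_nonzero_entry Xs)\<^sup>2 * neg_part_sq X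
      \<le> \<kappa>\<^sup>2 * neg_part_sq X" for X :: "real^'r^'n"
    using neg_part_sq_nonneg by (rule mult_right_mono)
  then show "\<exists>\<delta>>0. \<forall>X\<in>stiefel. norm (X - Xs) \<le> \<delta> \<longrightarrow> (infdist X nn_stiefel)\<^sup>2 \<le> \<kappa>\<^sup>2 * neg_part_sq X"
    using error_bound_no_zero_rows[OF Xs_nn rows] m
    by (intro exI[of _ "min_nonzero_entry Xs / 4"]) (auto intro: order_trans)
qed simp

lemma local_penalty_at_minimizer:
  fixes f :: "real^'r^'n \<Rightarrow> real"
  assumes \<gamma>: "\<gamma> > 0" and Xs: "Xs \<in> local_mins f nn_stiefel"
    and growth: "\<exists>\<delta>'>0. \<exists>L'>0. \<forall>X\<in>stiefel. norm (X - Xs) \<le> \<delta>' \<longrightarrow>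
      (\<forall>Xb \<in> proj_set nn_stiefel X. f X - f Xb \<ge> - L' * (norm (X - Xb))\<^sup>2)"
    and shape: "CARD('r) = 1 \<or> no_zero_rows Xs"
  shows "\<exists>\<delta>>0. \<exists>C. \<forall>X\<in>stiefel. dist X Xs \<le> \<delta> \<longrightarrow> f Xs \<le> f X + C * moreau_theta \<gamma> X"
proof -
  have Xs_nn: "Xs \<in> nn_stiefel"
    using Xs by (simp add: local_mins_def)
  obtain K where K: "0 \<le> K" and error_bound: "\<exists>\<delta>>0. \<forall>X\<in>stiefel. norm (X - Xs) \<le> \<delta> \<longrightarrow>
      (infdist X nn_stiefel)\<^sup>2 \<le> K * neg_part_sq X"
  proof (cases "CARD('r) = 1")
    case True
    show ?thesis
    proof (rule that[of 2])
      show "\<exists>\<delta>>0. \<forall>X\<in>stiefel. norm (X - Xs) \<le> \<delta> \<longrightarrow> (infdist X nn_stiefel)\<^sup>2 \<le> 2 * neg_part_sq X"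
        using error_bound_single_column[OF True Xs_nn] zero_less_one by blast
    qed simp
  next
    case False
    then have rows: "no_zero_rows Xs"
      using shape by blast
    have m: "0 < min_nonzero_entry Xs"
      using min_nonzero_entry_pos[OF Xs_nn] .
    show ?thesis
    proof (rule that)
      show "\<exists>\<delta>>0. \<forall>X\<in>stiefel. norm (X - Xs) \<le> \<delta> \<longrightarrow> (infdist X nn_stiefel)\<^sup>2
          \<le> 16 * real CARD('n) * real CARD('r) / (min_nonzero_entry Xs)\<^sup>2 * neg_part_sq X"
        using error_bound_no_zero_rows[OF Xs_nn rows] m by (intro exI[of _ "min_nonzero_entry Xs / 4"]) auto
    qed simp
  qed
  obtain \<delta>' L' where \<delta>': "\<delta>' > 0" and L': "L' > 0" and growth': "\<forall>X\<in>stiefel. norm (X - Xs) \<le> \<delta>' \<longrightarrow>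
      (\<forall>Xb \<in> proj_set nn_stiefel X. f X - f Xb \<ge> - L' * (norm (X - Xb))\<^sup>2)"
    using growth by blast
  obtain \<delta> where "\<delta> > 0" "\<forall>X\<in>stiefel. norm (X - Xs) \<le> \<delta> \<longrightarrow>
      f X - f Xs + 2 * \<gamma> * K * L' * moreau_theta \<gamma> X \<ge> 0"
    using local_exact_penalty[OF \<gamma> Xs less_imp_le[OF L'] K \<delta>' growth' error_bound] by blast
  then show ?thesis
    by (intro exI[of _ \<delta>] conjI exI[of _ "2 * \<gamma> * K * L'"]) (auto simp: dist_norm)
qed

lemma exact_penalty_nn_stiefel:
  fixes f :: "real^'r^'n \<Rightarrow> real"
  assumes "CARD('r) \<le> CARD('n)" and \<gamma>: "\<gamma> > 0" and f: "continuous_on stiefel f"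
    and local: "\<And>Xs. Xs \<in> global_mins f nn_stiefel \<Longrightarrow>
      \<exists>\<delta>>0. \<exists>C. \<forall>X\<in>stiefel. dist X Xs \<le> \<delta> \<longrightarrow> f Xs \<le> f X + C * moreau_theta \<gamma> X"
  shows "\<exists>\<rho>h>0. \<forall>\<rho>\<ge>\<rho>h.
           global_mins (\<lambda>X. f X + \<rho> * moreau_theta \<gamma> X) stiefel = global_mins f nn_stiefel"
proof (rule compact_exact_penalty[OF compact_stiefel f continuous_on_moreau_theta_minorant[OF \<gamma>]])
  show "closed (nn_stiefel::(real^'r^'n) set)" "nn_stiefel \<subseteq> (stiefel::(real^'r^'n) set)"
    "(nn_stiefel::(real^'r^'n) set) \<noteq> {}"
    using compact_imp_closed[OF compact_nn_stiefel] nn_stiefel_imp_stiefel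
      nn_stiefel_nonempty[OF assms(1)] by auto
  show "0 \<le> moreau_theta_minorant \<gamma> X \<and> moreau_theta_minorant \<gamma> X \<le> moreau_theta \<gamma> X"
    for X :: "real^'r^'n"
    using moreau_theta_minorant_nonneg[OF \<gamma>] moreau_theta_minorant_le[OF \<gamma>] by blast
  show "0 < moreau_theta_minorant \<gamma> X" if "X \<in> stiefel" "X \<notin> nn_stiefel" for X :: "real^'r^'n"
    using that moreau_theta_minorant_pos[OF \<gamma>] by (simp add: nn_stiefel_def)
  show "moreau_theta \<gamma> X = 0" if "X \<in> nn_stiefel" for X :: "real^'r^'n"
    using that by (intro moreau_theta_eq_0[OF \<gamma>]) (simp add: nn_stiefel_def)
qed (use local in blast)

lemma minimizer_imp_local_min:
  "X \<in> (if loc then local_mins f S else global_mins f S) \<Longrightarrow> X \<in> local_mins f S"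
  using global_mins_subset_local_mins by (auto split: if_splits)

lemma continuous_on_if_has_derivative:
  assumes "\<forall>x\<in>T. (f has_derivative f' x) (at x)" and "S \<subseteq> T"
  shows "continuous_on S f"
  using assms by (meson continuous_at_imp_continuous_on has_derivative_continuous subsetD)

theorem theorem3p10:
  fixes f :: "real^'r^'n \<Rightarrow> real"
    and \<O> :: "(real^'r^'n) set"
    and \<gamma> :: real
    and loc :: bool
  defines "Mins \<equiv> (if loc then local_mins f (nn_stiefel :: (real^'r^'n) set)
                            else global_mins f (nn_stiefel :: (real^'r^'n) set))"
  assumes nr: "CARD('n) \<ge> CARD('r)"
    and O_open: "open \<O>"
    and St_sub: "stiefel \<subseteq> \<O>"
    and f_C1: "\<exists>f'. (\<forall>X\<in>\<O>. (f has_derivative blinfun_apply (f' X)) (at X)) \<and> continuous_on \<O> f'"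
    and gamma_pos: "\<gamma> > 0"
    and zero_rows: "CARD('n) > CARD('r) \<and> CARD('r) > 1 \<longrightarrow> (\<forall>X\<in>Mins. no_zero_rows X)"
    and growth: "\<forall>Xs\<in>Mins. \<exists>\<delta>'>0. \<exists>L'>0. \<forall>X\<in>stiefel. norm (X - Xs) \<le> \<delta>' \<longrightarrow>
                    (\<forall>Xb \<in> proj_set nn_stiefel X. f X - f Xb \<ge> - L' * (norm (X - Xb))\<^sup>2)"
  shows
    "(\<forall>Xs\<in>Mins. \<forall>\<delta>' L'. \<delta>' > 0 \<and> L' > 0 \<and>
        (\<forall>X\<in>stiefel. norm (X - Xs) \<le> \<delta>' \<longrightarrow>
           (\<forall>Xb \<in> proj_set nn_stiefel X. f X - f Xb \<ge> - L' * (norm (X - Xb))\<^sup>2)) \<longrightarrow>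
        ((CARD('n) = CARD('r) \<or> (CARD('n) > CARD('r) \<and> CARD('r) = 1)) \<longrightarrow>
           (\<forall>\<kappa>'>0. (\<forall>Z\<in>(stiefel :: (real^'r^'n) set). infdist Z nn_stiefel \<le> \<kappa>' * infdist Z nonneg_mats) \<longrightarrow>
              (\<exists>\<delta>>0. \<forall>X\<in>stiefel. norm (X - Xs) \<le> \<delta> \<longrightarrow>
                 f X - f Xs + 2 * \<gamma> * \<kappa>'\<^sup>2 * L' * moreau_theta \<gamma> X \<ge> 0)))
        \<and> ((CARD('n) > CARD('r) \<and> CARD('r) > 1) \<longrightarrow>
           (let \<kappa> = 21 / 10 * sqrt (real CARD('r)) *
                      (1 + 3 * real CARD('r) * (real CARD('n) - real CARD('r)))
                     / min_nonzero_entry Xs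
            in (\<exists>\<delta>>0. \<forall>\<epsilon>\<ge>0. \<forall>X\<in>{X\<in>stiefel. moreau_theta \<gamma> X = \<epsilon>}. norm (X - Xs) \<le> \<delta> \<longrightarrow>
                 f X - f Xs + 2 * \<gamma> * \<kappa>\<^sup>2 * L' * moreau_theta \<gamma> X \<ge> 0))))
     \<and> (\<exists>\<rho>h>0. \<forall>\<rho>\<ge>\<rho>h.
          global_mins (\<lambda>X. f X + \<rho> * moreau_theta \<gamma> X) stiefel = global_mins f nn_stiefel)"
proof (intro conjI ballI allI impI, goal_cases)
  case (1 Xs \<delta>' L' \<kappa>')
  then show ?case
    using minimizer_imp_local_min unfolding Mins_def
    by (intro local_exact_penalty_distance_ratio[OF gamma_pos, where \<delta>'=\<delta>']) auto
next
  case (2 Xs \<delta>' L')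
  then have "\<exists>\<delta>>0. \<forall>X\<in>stiefel. norm (X - Xs) \<le> \<delta> \<longrightarrow> f X - f Xs + 2 * \<gamma> *
      (21 / 10 * sqrt (real CARD('r)) * (1 + 3 * real CARD('r) * (real CARD('n) - real CARD('r)))
        / min_nonzero_entry Xs)\<^sup>2 * L' * moreau_theta \<gamma> X \<ge> 0"
    using minimizer_imp_local_min zero_rows unfolding Mins_def
    by (intro local_exact_penalty_no_zero_rows[OF gamma_pos, where \<delta>'=\<delta>']) auto
  then show ?case
    unfolding Let_def by blast
next
  case 3
  obtain f' where "\<forall>X\<in>\<O>. (f has_derivative blinfun_apply (f' X)) (at X)"
    using f_C1 by blast
  then have "continuous_on stiefel f"
    using St_sub by (rule continuous_on_if_has_derivative)
  then show ?case
  proof (rule exact_penalty_nn_stiefel[OF nr gamma_pos])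
    fix Xs
    assume "Xs \<in> global_mins f nn_stiefel"
    then have Xs: "Xs \<in> Mins" "Xs \<in> nn_stiefel"
      using global_mins_subset_local_mins unfolding Mins_def by (auto simp: global_mins_def)
    then show "\<exists>\<delta>>0. \<exists>C. \<forall>X\<in>stiefel. dist X Xs \<le> \<delta> \<longrightarrow> f Xs \<le> f X + C * moreau_theta \<gamma> X"
      using zero_rows growth minimizer_imp_local_min[of Xs loc f] unfolding Mins_def
      by (intro local_penalty_at_minimizer[OF gamma_pos] single_column_or_no_zero_rows[OF nr]) auto
  qed
qed

end
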